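(* For every integer $n\ge 2$ and every real number $p\in(0,1)$, \[ \bigl(n^p-(n-1)^p\bigr)^{1/(1-p)}+3^{-p/(1-p)}\bigl((n-2)n^p-(n-3)(n-1)^p\bigr)^{1/(1-p)}\le (n-1)^{p/(1-p)}. \] *)

theory Defs
  imports Complex_Main
begin

end

theory Submission imports Defs "HOL-Analysis.Convex" begin

text \<open>Put \<open>m = n - 1\<close>, \<open>q = 1/(1-p)\<close>, \<open>t = p/(1-p)\<close> and \<open>n\<^sup>p = m\<^sup>p (1 + u)\<close>.
  Then \<open>n\<^sup>p - m\<^sup>p = m\<^sup>p u\<close> and \<open>(n-2) n\<^sup>p - (n-3) m\<^sup>p = m\<^sup>p (1 + (m-1) u)\<close>, so the
  left-hand side equals \<open>m\<^sup>t (u\<^sup>q + 3\<^sup>-\<^sup>t (1 + (m-1) u)\<^sup>q)\<close> and it suffices to bound the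
  bracket by 1. Bernoulli's inequality gives \<open>u \<le> p/m\<close>, and then
  \<open>1 + (m-1) u \<le> (1/m)\<cdot>1 + (1 - 1/m)(1 + p)\<close>. Convexity of \<open>x\<^sup>q\<close> splits the bracket into
  \<open>(1/m)(p\<^sup>q + 3\<^sup>-\<^sup>t) + (1 - 1/m) 3\<^sup>-\<^sup>t (1 + p)\<^sup>q\<close>, and both \<open>p\<^sup>q + 3\<^sup>-\<^sup>t\<close> and
  \<open>3\<^sup>-\<^sup>t (1 + p)\<^sup>q\<close> are at most 1 because \<open>ln 3 \<ge> 1\<close>.\<close>

lemma ln_3_ge_1: "1 \<le> ln (3::real)"
  using exp_le by (subst ln_ge_iff) auto

lemma exp_minus_le_inverse_one_plus:
  fixes x :: real
  assumes "0 \<le> x"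
  shows "exp (- x) \<le> 1 / (1 + x)"
  using exp_ge_add_one_self[of x] assms by (simp add: exp_minus field_simps)

lemma powr_one_plus_le_one_plus_mult:
  fixes x p :: real
  assumes "-1 < x" "0 \<le> p" "p \<le> 1"
  shows "(1 + x) powr p \<le> 1 + p * x"
  using Youngs_inequality_0[of p "1 - p" "1 + x" 1] assms by (simp add: algebra_simps)

lemma one_plus_powr_le_three_powr:
  fixes x a :: real
  assumes "0 \<le> x" "0 \<le> a"
  shows "(1 + x) powr a \<le> 3 powr (x * a)"
proof -
  have "ln (1 + x) \<le> x * ln 3"
    using ln_add_one_self_le_self[of x] mult_left_mono[OF ln_3_ge_1, of x] assms by simp
  then have "a * ln (1 + x) \<le> x * a * ln 3"
    using mult_left_mono[of "ln (1 + x)" "x * ln 3" a] assms by (simp add: mult_ac)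
  then show ?thesis
    using assms by (simp add: powr_def)
qed

lemma powr_one_div_one_minus_add_three_powr_le_1:
  fixes p :: real
  assumes "0 < p" "p < 1"
  shows "p powr (1 / (1 - p)) + 3 powr (- (p / (1 - p))) \<le> 1"
proof -
  define t where "t = p / (1 - p)"
  have "t \<ge> 0" and t_ln: "t * (p - 1) = - p" and one_plus_t: "1 / (1 + t) = 1 - p"
    using assms by (simp_all add: t_def field_simps)
  have "p powr t = exp (t * ln p)"
    using assms by (simp add: powr_def)
  also have "\<dots> \<le> exp (- p)"
    using ln_le_minus_one[of p] mult_left_mono[of "ln p" "p - 1" t] assms \<open>t \<ge> 0\<close> t_ln
    by simp
  also have "\<dots> \<le> 1 / (1 + p)"
    using assms by (intro exp_minus_le_inverse_one_plus) simp
  finally have "p * p powr t \<le> p / (1 + p)"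
    using mult_left_mono[of "p powr t" "1 / (1 + p)" p] assms by simp
  moreover have "p powr (1 / (1 - p)) = p * p powr t"
  proof -
    have "1 / (1 - p) = 1 + t"
      using assms by (simp add: t_def field_simps)
    then show ?thesis
      using assms by (simp add: powr_add)
  qed
  moreover have "3 powr (- t) \<le> 1 - p"
  proof -
    have "3 powr (- t) = exp (- (t * ln 3))"
      by (simp add: powr_def)
    also have "\<dots> \<le> exp (- t)"
      using ln_3_ge_1 \<open>t \<ge> 0\<close> mult_left_mono[of 1 "ln 3" t] by simp
    also have "\<dots> \<le> 1 - p"
      using exp_minus_le_inverse_one_plus[OF \<open>t \<ge> 0\<close>] one_plus_t by simp
    finally show ?thesis .
  qed
  moreover have "p / (1 + p) \<le> p"
    using assms by (simp add: divide_le_eq)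
  ultimately show ?thesis
    by (simp add: t_def)
qed

lemma increment_bracket_le_1:
  fixes m u p :: real
  assumes "1 \<le> m" "0 \<le> u" "u \<le> p / m" "0 < p" "p < 1"
  shows "u powr (1 / (1 - p)) + 3 powr (- (p / (1 - p))) * (1 + (m - 1) * u) powr (1 / (1 - p))
         \<le> 1"
proof -
  define q where "q = 1 / (1 - p)"
  define c where "c = 3 powr (- (p / (1 - p)))"
  define r where "r = 1 - 1 / m"
  have "1 \<le> q" and pq: "p * q = p / (1 - p)"
    using assms by (simp_all add: q_def field_simps)
  have r: "0 \<le> r" "r \<le> 1" "1 - r = 1 / m"
    using assms by (auto simp: r_def field_simps)
  have "u powr q \<le> (p / m) powr q"
    using assms \<open>1 \<le> q\<close> by (intro powr_mono2) auto
  also have "\<dots> = p powr q / m powr q"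
    using assms by (simp add: powr_divide)
  also have "\<dots> \<le> p powr q / m"
    using powr_mono[OF \<open>1 \<le> q\<close> \<open>1 \<le> m\<close>] assms by (intro divide_left_mono) auto
  finally have u_le: "u powr q \<le> (1 - r) * p powr q"
    using r by simp
  have "1 + (m - 1) * u \<le> 1 + (m - 1) * (p / m)"
    using assms by (intro add_left_mono mult_left_mono) auto
  also have "\<dots> = (1 - r) *\<^sub>R 1 + r *\<^sub>R (1 + p)"
    using assms by (simp add: r_def field_simps)
  finally have "(1 + (m - 1) * u) powr q \<le> ((1 - r) *\<^sub>R 1 + r *\<^sub>R (1 + p)) powr q"
    using assms \<open>1 \<le> q\<close> by (intro powr_mono2) auto
  also have "\<dots> \<le> (1 - r) * 1 powr q + r * (1 + p) powr q"
    using convex_onD[OF powr_convex[OF \<open>1 \<le> q\<close>], of r 1 "1 + p"] r assms by simp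
  finally have bracket_le: "(1 + (m - 1) * u) powr q \<le> (1 - r) + r * (1 + p) powr q"
    by simp
  have c_le: "c * (1 + p) powr q \<le> 1"
  proof -
    have "c * (1 + p) powr q \<le> c * 3 powr (p * q)"
      using one_plus_powr_le_three_powr[of p q] assms \<open>1 \<le> q\<close>
      by (intro mult_left_mono) (auto simp: c_def)
    also have "\<dots> = 1"
      by (simp add: c_def pq powr_add[symmetric])
    finally show ?thesis .
  qed
  have "u powr q + c * (1 + (m - 1) * u) powr q
        \<le> (1 - r) * p powr q + c * ((1 - r) + r * (1 + p) powr q)"
    using u_le bracket_le by (intro add_mono mult_left_mono) (auto simp: c_def)
  also have "\<dots> = (1 - r) * (p powr q + c) + r * (c * (1 + p) powr q)"
    by (simp add: algebra_simps)
  also have "\<dots> \<le> (1 - r) * 1 + r * 1"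
    using powr_one_div_one_minus_add_three_powr_le_1[OF assms(4,5)] c_le r assms
    by (intro add_mono mult_left_mono) (auto simp: c_def q_def)
  finally show ?thesis
    by (simp add: q_def c_def)
qed

lemma powr_scale_out:
  fixes m u p q c :: real
  assumes "1 \<le> m" "0 \<le> u"
  shows "(m powr p * u) powr q + c * (m powr p * (1 + (m - 1) * u)) powr q
         = m powr (p * q) * (u powr q + c * (1 + (m - 1) * u) powr q)"
proof -
  have scale: "(m powr p * a) powr q = m powr (p * q) * a powr q" if "0 \<le> a" for a
    using assms that by (simp add: powr_mult powr_powr)
  have "0 \<le> 1 + (m - 1) * u"
    using assms by simp
  then show ?thesis
    unfolding scale[OF \<open>0 \<le> u\<close>] scale[OF \<open>0 \<le> 1 + (m - 1) * u\<close>]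
    by (simp add: algebra_simps)
qed

theorem lemma6:
  fixes n :: nat and p :: real
  assumes "n \<ge> 2" and "0 < p" and "p < 1"
  shows "(real n powr p - (real n - 1) powr p) powr (1 / (1 - p))
         + 3 powr (- p / (1 - p))
           * ((real n - 2) * real n powr p - (real n - 3) * (real n - 1) powr p) powr (1 / (1 - p))
         \<le> (real n - 1) powr (p / (1 - p))"
proof -
  define m where "m = real n - 1"
  define u where "u = (1 + 1 / m) powr p - 1"
  define q where "q = 1 / (1 - p)"
  have "1 \<le> m"
    using assms(1) by (simp add: m_def)
  have "real n = m * (1 + 1 / m)"
    using \<open>1 \<le> m\<close> by (simp add: m_def field_simps)
  then have n_powr: "real n powr p = m powr p * (1 + u)"
    using \<open>1 \<le> m\<close> by (simp add: u_def powr_mult)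
  have "0 \<le> u"
    using assms \<open>1 \<le> m\<close> by (simp add: u_def ge_one_powr_ge_zero)
  have "u \<le> p / m"
  proof -
    have "-1 < 1 / m"
      using \<open>1 \<le> m\<close> by (simp add: less_le_trans[of _ 0])
    then show ?thesis
      using powr_one_plus_le_one_plus_mult[of "1 / m" p] assms by (simp add: u_def)
  qed
  have "(real n powr p - (real n - 1) powr p) powr q
        + 3 powr (- p / (1 - p))
          * ((real n - 2) * real n powr p - (real n - 3) * (real n - 1) powr p) powr q
        = (m powr p * u) powr q + 3 powr (- (p / (1 - p))) * (m powr p * (1 + (m - 1) * u)) powr q"
    by (simp add: n_powr m_def algebra_simps)
  also have "\<dots> = m powr (p / (1 - p))
      * (u powr q + 3 powr (- (p / (1 - p))) * (1 + (m - 1) * u) powr q)"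
    using powr_scale_out[of m u p q] \<open>1 \<le> m\<close> \<open>0 \<le> u\<close> by (simp add: q_def)
  also have "\<dots> \<le> m powr (p / (1 - p))"
    using increment_bracket_le_1[OF \<open>1 \<le> m\<close> \<open>0 \<le> u\<close> \<open>u \<le> p / m\<close> assms(2,3)]
    by (intro mult_left_le) (auto simp: q_def)
  finally show ?thesis
    by (simp add: m_def q_def)
qed

end
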